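(* Let $0<\lambda<1$, let $c>0$, and let $A \subseteq \mathbb{N}$. Suppose that $$\sum_{a \in A[x]} w(a) \sim \exp(c x^{1-\lambda}).$$ Then $$\limsup_{x \to \infty} \frac{\pi_A(x + x^\lambda) - \pi_A(x)}{x^\lambda/\log(x)} \le \frac{\exp[c(1-\lambda)] - 1}{c(1-\lambda)}.$$
   Context: Fix $0<\lambda<1$. For $c>0$ and $x>0$, define $w(x) = \frac{c(1-\lambda)\log(x)\exp(c x^{1-\lambda})}{x^\lambda}$. Here $\mathbb{N} = \{1,2,3,\dots\}$. For $A \subseteq \mathbb{N}$ and $x\in\mathbb{R}$, write $A[x] = \{a \in A : a \le x\}$ and $\pi_A(x) = \# A[x]$. $f\sim g$ means $f(x)/g(x)\to 1$ as $x\to\infty$. *)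

theory Defs
  imports "HOL-Analysis.Analysis" "HOL-Library.Landau_Symbols"
begin

definition wt :: "real \<Rightarrow> real \<Rightarrow> real \<Rightarrow> real" where
  "wt lam c x = c * (1 - lam) * ln x * exp (c * x powr (1 - lam)) / x powr lam"

definition upto_set :: "nat set \<Rightarrow> real \<Rightarrow> nat set" where
  "upto_set A x = {a \<in> A. real a \<le> x}"

definition countA :: "nat set \<Rightarrow> real \<Rightarrow> real" where
  "countA A x = real (card (upto_set A x))"

end

theory Submission
  imports Defs "HOL-Real_Asymp.Real_Asymp"
begin

text \<open>
  For large \<open>x\<close> the weight \<open>w\<close> is increasing, so every element of \<open>A\<close> in \<open>(x, x + x\<^sup>\<lambda>]\<close>
  carries weight at least \<open>w(x) = c(1-\<lambda>) exp(c x\<^sup>1\<^sup>-\<^sup>\<lambda>) log x / x\<^sup>\<lambda>\<close>. Hence the normalised count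
  in the window is at most the increment of the weighted sum divided by \<open>c(1-\<lambda>) exp(c x\<^sup>1\<^sup>-\<^sup>\<lambda>)\<close>.
  By the hypothesis the weighted sum is asymptotic to \<open>E(x) = exp(c x\<^sup>1\<^sup>-\<^sup>\<lambda>)\<close>, and
  \<open>E(x + x\<^sup>\<lambda>) / E(x) \<rightarrow> exp(c(1-\<lambda>))\<close>, so that bound tends to \<open>(exp(c(1-\<lambda>)) - 1) / (c(1-\<lambda>))\<close>.
\<close>

lemma finite_upto_set: "finite (upto_set A x)"
proof (rule finite_subset)
  have "a \<le> nat \<lceil>x\<rceil>" if "real a \<le> x" for a
    using that real_nat_ceiling_ge[of x] by linarith
  then show "upto_set A x \<subseteq> {..nat \<lceil>x\<rceil>}"
    unfolding upto_set_def by auto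
qed simp

lemma upto_set_mono: "x \<le> y \<Longrightarrow> upto_set A x \<subseteq> upto_set A y"
  unfolding upto_set_def by auto

lemma countA_diff_mult_le_sum_diff:
  fixes f :: "real \<Rightarrow> real"
  assumes "x \<le> y" and mono: "\<And>t. x < t \<Longrightarrow> t \<le> y \<Longrightarrow> f x \<le> f t"
  shows "(countA A y - countA A x) * f x
           \<le> (\<Sum>a\<in>upto_set A y. f (real a)) - (\<Sum>a\<in>upto_set A x. f (real a))"
proof -
  define D where "D = upto_set A y - upto_set A x"
  have sub: "upto_set A x \<subseteq> upto_set A y"
    using assms(1) by (rule upto_set_mono)
  have "countA A y - countA A x = real (card D)"
    unfolding countA_def D_def using sub finite_upto_set
    by (simp add: card_Diff_subset card_mono of_nat_diff)
  moreover have "(\<Sum>a\<in>upto_set A y. f (real a)) - (\<Sum>a\<in>upto_set A x. f (real a)) = (\<Sum>a\<in>D. f (real a))"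
    unfolding D_def using sub finite_upto_set by (simp add: sum_diff)
  moreover have "real (card D) * f x \<le> (\<Sum>a\<in>D. f (real a))"
    by (rule sum_bounded_below) (auto simp: D_def upto_set_def intro: mono)
  ultimately show ?thesis by simp
qed

lemma wt_eq: "wt lam c x = c * (1 - lam) * exp (c * x powr (1 - lam)) * (ln x / x powr lam)"
  unfolding wt_def by simp

text \<open>\<open>wt lam c x = c(1-\<lambda>) ln x \<cdot> exp \<phi>(x)\<close> with \<open>\<phi>(t) = c t\<^sup>1\<^sup>-\<^sup>\<lambda> - \<lambda> ln t\<close>, and \<open>\<phi>' > 0\<close> eventually.\<close>
lemma wt_eventually_mono:
  assumes "0 < lam" "lam < 1" "0 < c"
  obtains x0 where "\<And>x y. x0 \<le> x \<Longrightarrow> x \<le> y \<Longrightarrow> wt lam c x \<le> wt lam c y"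
proof -
  define \<phi> where "\<phi> = (\<lambda>t::real. c * t powr (1 - lam) - lam * ln t)"
  have "\<forall>\<^sub>F t in at_top. c * (1 - lam) * t powr (-lam) - lam / t \<ge> 0"
    using assms by real_asymp
  then obtain t0 where t0: "\<And>t. t \<ge> t0 \<Longrightarrow> c * (1 - lam) * t powr (-lam) - lam / t \<ge> 0"
    by (auto simp: eventually_at_top_linorder)
  define x0 where "x0 = max t0 2"
  have \<phi>_mono: "\<phi> x \<le> \<phi> y" if "x0 \<le> x" "x \<le> y" for x y
  proof (rule DERIV_nonneg_imp_nondecreasing[OF that(2)])
    fix t assume "x \<le> t" "t \<le> y"
    then have "t \<ge> t0" "t > 0" using that by (auto simp: x0_def)
    then have "(\<phi> has_real_derivative c * (1 - lam) * t powr (-lam) - lam / t) (at t)"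
      unfolding \<phi>_def by (auto intro!: derivative_eq_intros)
    then show "\<exists>d. (\<phi> has_real_derivative d) (at t) \<and> d \<ge> 0"
      using t0 \<open>t \<ge> t0\<close> by blast
  qed
  have wt_\<phi>: "wt lam c x = c * (1 - lam) * ln x * exp (\<phi> x)" if "x > 0" for x
    using that by (simp add: wt_def \<phi>_def powr_def exp_diff)
  show ?thesis
  proof
    fix x y assume xy: "x0 \<le> x" "x \<le> y"
    then have "x \<ge> 2" by (simp add: x0_def)
    then have "c * (1 - lam) * ln x * exp (\<phi> x) \<le> c * (1 - lam) * ln y * exp (\<phi> y)"
      using assms xy \<phi>_mono[OF xy] by (intro mult_mono mult_left_mono) auto
    with \<open>x \<ge> 2\<close> xy show "wt lam c x \<le> wt lam c y" by (simp add: wt_\<phi>)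
  qed
qed

lemma exp_powr_window_ratio_tendsto:
  fixes lam c :: real
  assumes "0 < lam" "lam < 1"
  shows "((\<lambda>x. exp (c * (x + x powr lam) powr (1 - lam)) / exp (c * x powr (1 - lam)))
           \<longlongrightarrow> exp (c * (1 - lam))) at_top"
proof -
  have "((\<lambda>x::real. (x + x powr lam) powr (1 - lam) - x powr (1 - lam)) \<longlongrightarrow> 1 - lam) at_top"
    using assms by real_asymp
  then have "((\<lambda>x. exp (c * ((x + x powr lam) powr (1 - lam) - x powr (1 - lam))))
               \<longlongrightarrow> exp (c * (1 - lam))) at_top"
    by (intro tendsto_exp tendsto_mult_left)
  then show ?thesis by (simp add: exp_diff[symmetric] algebra_simps)
qed

lemma asymp_equiv_increment_tendsto:
  fixes S E g :: "real \<Rightarrow> real"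
  assumes "S \<sim>[at_top] E" and E_nz: "\<And>x. E x \<noteq> 0"
    and g: "filterlim g at_top at_top"
    and ratio: "((\<lambda>x. E (g x) / E x) \<longlongrightarrow> r) at_top"
  shows "((\<lambda>x. (S (g x) - S x) / E x) \<longlongrightarrow> r - 1) at_top"
proof -
  have SE: "((\<lambda>x. S x / E x) \<longlongrightarrow> 1) at_top"
    using assms(1) by (rule asymp_equivD_strong) (simp add: E_nz)
  have "((\<lambda>x. S (g x) / E (g x) * (E (g x) / E x) - S x / E x) \<longlongrightarrow> 1 * r - 1) at_top"
    by (intro tendsto_intros ratio SE filterlim_compose[OF SE g])
  moreover have "S (g x) / E (g x) * (E (g x) / E x) - S x / E x = (S (g x) - S x) / E x" for x
    using E_nz[of "g x"] by (simp add: diff_divide_distrib)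
  ultimately show ?thesis by simp
qed

lemma Limsup_le_of_eventually_le_tendsto:
  fixes f g :: "real \<Rightarrow> real"
  assumes "\<forall>\<^sub>F x in at_top. f x \<le> g x" "(g \<longlongrightarrow> L) at_top"
  shows "Limsup at_top (\<lambda>x. ereal (f x)) \<le> ereal L"
proof -
  have "Limsup at_top (\<lambda>x. ereal (f x)) \<le> Limsup at_top (\<lambda>x. ereal (g x))"
    using assms(1) by (intro Limsup_mono) simp
  also have "\<dots> = ereal L"
    using assms(2) by (intro lim_imp_Limsup tendsto_ereal) simp_all
  finally show ?thesis .
qed

lemma countA_window_le_weight_increment:
  assumes "lam < 1" "0 < c" and wt_mono: "\<And>t. x \<le> t \<Longrightarrow> wt lam c x \<le> wt lam c t"
  shows "(countA A (x + x powr lam) - countA A x) / (x powr lam / ln x)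
           \<le> ((\<Sum>a\<in>upto_set A (x + x powr lam). wt lam c (real a)) - (\<Sum>a\<in>upto_set A x. wt lam c (real a)))
               / exp (c * x powr (1 - lam)) / (c * (1 - lam))"
proof -
  have "wt lam c x / exp (c * x powr (1 - lam)) / (c * (1 - lam)) = ln x / x powr lam"
    using assms(1,2) by (simp add: wt_eq)
  then have "(countA A (x + x powr lam) - countA A x) / (x powr lam / ln x)
      = (countA A (x + x powr lam) - countA A x) * wt lam c x / exp (c * x powr (1 - lam)) / (c * (1 - lam))"
    by (metis divide_divide_eq_right times_divide_eq_right)
  also have "\<dots> \<le> ((\<Sum>a\<in>upto_set A (x + x powr lam). wt lam c (real a)) - (\<Sum>a\<in>upto_set A x. wt lam c (real a)))
               / exp (c * x powr (1 - lam)) / (c * (1 - lam))"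
    using assms(1,2)
    by (intro divide_right_mono countA_diff_mult_le_sum_diff) (auto intro: wt_mono)
  finally show ?thesis .
qed

theorem mainTheorem4:
  fixes lam c :: real and A :: "nat set"
  assumes "0 < lam" "lam < 1" "0 < c"
    and "0 \<notin> A"
    and "(\<lambda>x. \<Sum>a\<in>upto_set A x. wt lam c (real a)) \<sim>[at_top] (\<lambda>x. exp (c * x powr (1 - lam)))"
  shows "Limsup at_top (\<lambda>x::real. ereal ((countA A (x + x powr lam) - countA A x) / (x powr lam / ln x)))
           \<le> ereal ((exp (c * (1 - lam)) - 1) / (c * (1 - lam)))"
proof (rule Limsup_le_of_eventually_le_tendsto)
  define S where "S = (\<lambda>x. \<Sum>a\<in>upto_set A x. wt lam c (real a))"
  define E where "E = (\<lambda>x::real. exp (c * x powr (1 - lam)))"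
  obtain x0 where wt_mono: "\<And>x y. x0 \<le> x \<Longrightarrow> x \<le> y \<Longrightarrow> wt lam c x \<le> wt lam c y"
    using wt_eventually_mono assms(1-3) by blast
  show "\<forall>\<^sub>F x in at_top. (countA A (x + x powr lam) - countA A x) / (x powr lam / ln x)
          \<le> (S (x + x powr lam) - S x) / E x / (c * (1 - lam))"
    using eventually_ge_at_top[of x0] unfolding S_def E_def
    by eventually_elim (use assms(2,3) wt_mono in \<open>blast intro: countA_window_le_weight_increment\<close>)
  have "filterlim (\<lambda>x::real. x + x powr lam) at_top at_top"
    using assms(1,2) by real_asymp
  then have "((\<lambda>x. (S (x + x powr lam) - S x) / E x) \<longlongrightarrow> exp (c * (1 - lam)) - 1) at_top"
    using assms(5)[folded S_def E_def] exp_powr_window_ratio_tendsto[OF assms(1,2)]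
    by (intro asymp_equiv_increment_tendsto) (simp_all add: E_def)
  then show "((\<lambda>x. (S (x + x powr lam) - S x) / E x / (c * (1 - lam)))
          \<longlongrightarrow> (exp (c * (1 - lam)) - 1) / (c * (1 - lam))) at_top"
    using assms(2,3) by (intro tendsto_divide tendsto_const) simp_all
qed

end
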